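(* Let $w=w_1\cdots w_n$ be a word of length $n\ge 3$, let $d\ge 1$, and let $G_w$ be any $(n,d)$-grid satisfying the rules below. Let $p\in[n]^d$ be a counter-point with $\tau_1(p)=r$. Then the number of directions $v\in\{-1,0,1\}^d\setminus\{\vec 0\}$ such that $\{p,p+v,\dots,p+(n-1)v\}\subseteq[n]^d$ and $G_w(p)G_w(p+v)\cdots G_w(p+(n-1)v)$ equals $w$ or $w$ reversed (i.e. the number of lines with initial point $p$ that contain $w$) is at least $(1-2e^{-c/10000})2^{r-1}$. If moreover $w_i=w_{n-i+1}$ for all $i$, this number is at least $(1-2e^{-c/10000})2^{r}$.
   Context: Let $[n]=\{1,\dots,n\}$. For $p\in[n]^d$ and $i\in[n]$ let $\pi_i(p)=|\{j\in[d]:p_j=i\}|$, $\tau_i(p)=\pi_i(p)+\pi_{n-i+1}(p)$, and $\sigma(p)=\sum_{1\le i\le n/2}\pi_i(p)$. Set $c=\frac{3.9d}{n+2}$ and $k=\frac{2.3d}{n+2}$. A point $p\in[n]^d$ is a counter-point if $c<\tau_1(p)<1.1c$ and $\frac{0.99(d-\tau_1(p))}{n-2}\le\pi_i(p)\le\frac{1.01(d-\tau_1(p))}{n-2}$ for all $1<i<n$. An $(n,d)$-grid is a function $G:[n]^d\to\Sigma$ into a set of letters. The grid $G_w$ is required to satisfy: if $\sigma(p)$ is odd, then $G_w(p)=w_1$ when $p$ is a counter-point, and $G_w(p)=w_i$ when $\tau_1(p)\le c$ and there is a unique integer $i$ with $1<i\le\lceil n/2\rceil$ and $\tau_i(p)\ge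 k$; if $\sigma(p)$ is even, then $G_w(p)=w_n$ when $p$ is a counter-point, and $G_w(p)=w_{n-i+1}$ when $\tau_1(p)\le c$ and there is a unique integer $i$ with $1<i\le\lceil n/2\rceil$ and $\tau_i(p)\ge k$; all other points are assigned arbitrary letters. *)

theory Defs
  imports Complex_Main
begin

text \<open>Points of [n]^d are integer lists of length d with entries in {1..n};
  coordinate j of the paper is list position j-1.  Words are lists, w_i = w!(i-1).\<close>

definition in_grid :: "nat \<Rightarrow> nat \<Rightarrow> int list \<Rightarrow> bool" where
  "in_grid n d p \<longleftrightarrow> length p = d \<and> (\<forall>x\<in>set p. 1 \<le> x \<and> x \<le> int n)"

definition pi_cnt :: "nat \<Rightarrow> int list \<Rightarrow> nat" where
  "pi_cnt i p = count_list p (int i)"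

definition tau :: "nat \<Rightarrow> nat \<Rightarrow> int list \<Rightarrow> nat" where
  "tau n i p = pi_cnt i p + pi_cnt (n - i + 1) p"

definition sigma :: "nat \<Rightarrow> int list \<Rightarrow> nat" where
  "sigma n p = (\<Sum>i\<in>{i. 1 \<le> i \<and> real i \<le> real n / 2}. pi_cnt i p)"

definition cval :: "nat \<Rightarrow> nat \<Rightarrow> real" where
  "cval n d = 3.9 * real d / (real n + 2)"

definition kval :: "nat \<Rightarrow> nat \<Rightarrow> real" where
  "kval n d = 2.3 * real d / (real n + 2)"

definition counter_point :: "nat \<Rightarrow> nat \<Rightarrow> int list \<Rightarrow> bool" where
  "counter_point n d p \<longleftrightarrow>
     cval n d < real (tau n 1 p) \<and> real (tau n 1 p) < 1.1 * cval n d \<and>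
     (\<forall>i. 1 < i \<and> i < n \<longrightarrow>
        0.99 * (real d - real (tau n 1 p)) / (real n - 2) \<le> real (pi_cnt i p) \<and>
        real (pi_cnt i p) \<le> 1.01 * (real d - real (tau n 1 p)) / (real n - 2))"

definition unique_heavy :: "nat \<Rightarrow> nat \<Rightarrow> int list \<Rightarrow> nat \<Rightarrow> bool" where
  "unique_heavy n d p i \<longleftrightarrow>
     (1 < i \<and> int i \<le> \<lceil>real n / 2\<rceil> \<and> real (tau n i p) \<ge> kval n d) \<and>
     (\<forall>j. 1 < j \<and> int j \<le> \<lceil>real n / 2\<rceil> \<and> real (tau n j p) \<ge> kval n d \<longrightarrow> j = i)"

definition grid_rules :: "nat \<Rightarrow> nat \<Rightarrow> 'a list \<Rightarrow> (int list \<Rightarrow> 'a) \<Rightarrow> bool" where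
  "grid_rules n d w G \<longleftrightarrow> (\<forall>p. in_grid n d p \<longrightarrow>
     (odd (sigma n p) \<longrightarrow>
        (counter_point n d p \<longrightarrow> G p = w ! 0) \<and>
        (\<forall>i. real (tau n 1 p) \<le> cval n d \<and> unique_heavy n d p i \<longrightarrow> G p = w ! (i - 1))) \<and>
     (even (sigma n p) \<longrightarrow>
        (counter_point n d p \<longrightarrow> G p = w ! (n - 1)) \<and>
        (\<forall>i. real (tau n 1 p) \<le> cval n d \<and> unique_heavy n d p i \<longrightarrow> G p = w ! (n - i))))"

definition directions :: "nat \<Rightarrow> int list set" where
  "directions d = {v. length v = d \<and> set v \<subseteq> {-1, 0, 1} \<and> v \<noteq> replicate d 0}"

definition line_pt :: "int list \<Rightarrow> int list \<Rightarrow> nat \<Rightarrow> int list" where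
  "line_pt p v t = map2 (\<lambda>a b. a + int t * b) p v"

definition line_contains :: "nat \<Rightarrow> nat \<Rightarrow> 'a list \<Rightarrow> (int list \<Rightarrow> 'a) \<Rightarrow> int list \<Rightarrow> int list \<Rightarrow> bool" where
  "line_contains n d w G p v \<longleftrightarrow>
     (\<forall>t<n. in_grid n d (line_pt p v t)) \<and>
     (map (\<lambda>t. G (line_pt p v t)) [0..<n] = w \<or> map (\<lambda>t. G (line_pt p v t)) [0..<n] = rev w)"

definition num_lines :: "nat \<Rightarrow> nat \<Rightarrow> 'a list \<Rightarrow> (int list \<Rightarrow> 'a) \<Rightarrow> int list \<Rightarrow> nat" where
  "num_lines n d w G p = card {v \<in> directions d. line_contains n d w G p v}"

end

theory Submission
  imports Defs
begin

text \<open>Let J be the r coordinates of the counter point p that equal 1 or n. For S \<subseteq> J, moving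
  the coordinates in S towards the centre gives a line p, p + v, ..., p + (n - 1) v in the grid.
  If |S| \<ge> r/4, its interior points have \<tau>_1 \<le> c and the unique heavy index min (t + 1) (n - t),
  and its last point is again a counter point, so the grid rules force the letter w(t + 1) or
  w(n - t). Which one is decided by the parity of \<sigma>, which is that of \<sigma>(p) on the first half of
  the line and that of \<sigma>(p) + |S| on the second half. Hence for odd |S|, or for a palindrome w,
  the line spells w or its reverse. Counting such S gives at least 2^(r - 1) (resp. 2^r) lines
  minus the number of subsets of size below r/4, which a Chernoff-type bound makes at most
  2^r exp(-r/10000) \<le> 2^r exp(-c/10000).\<close>

section \<open>Binomial estimates\<close>

text \<open>Each term with 4 k < r is at most (r choose k) 2^(r/4 - k), and the binomial theorem sums
  these to (3/2 \<cdot> 2^(1/4))^r; finally 3/2 \<cdot> 2^(1/4) < 1.8 < 2 exp(-1/10000).\<close>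

lemma sum_binomial_lower_quarter:
  "real (\<Sum>k | 4 * k < r. r choose k) \<le> 2 ^ r * exp (- real r / 10000)"
proof -
  define Q :: real where "Q = 2 powr (1/4)"
  have Q4: "Q ^ 4 = 2"
    unfolding Q_def by (simp add: powr_realpow[symmetric] powr_powr)
  have Q1: "1 \<le> Q"
    unfolding Q_def by (rule ge_one_powr_ge_zero) auto
  have Q_le: "Q \<le> 1.2"
    by (rule power_le_imp_le_base[where n = 3]) (use Q4 in \<open>simp_all add: eval_nat_numeral\<close>)
  have small_term: "1 \<le> Q ^ r * (1/2) ^ k" if "4 * k < r" for k
  proof -
    have "(2::real) ^ k = Q ^ (4 * k)" using Q4 by (simp add: power_mult)
    also have "\<dots> \<le> Q ^ r" using Q1 that by (intro power_increasing) auto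
    finally show ?thesis by (simp add: field_simps)
  qed
  have "real (\<Sum>k | 4 * k < r. r choose k) \<le> (\<Sum>k | 4 * k < r. real (r choose k) * (Q ^ r * (1/2) ^ k))"
    unfolding of_nat_sum using small_term by (intro sum_mono) (simp add: mult_le_cancel_left1)
  also have "\<dots> \<le> (\<Sum>k\<le>r. real (r choose k) * (Q ^ r * (1/2) ^ k))"
    using Q1 by (intro sum_mono2) auto
  also have "\<dots> = Q ^ r * (\<Sum>k\<le>r. real (r choose k) * (1/2) ^ k * 1 ^ (r - k))"
    by (simp add: sum_distrib_left algebra_simps)
  also have "\<dots> = Q ^ r * (1/2 + 1) ^ r"
    by (simp only: binomial_ring)
  also have "\<dots> = (1.5 * Q) ^ r"
    by (simp add: power_mult_distrib[symmetric] mult.commute)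
  also have "\<dots> \<le> (2 * exp (- 1 / 10000)) ^ r"
    using exp_ge_add_one_self[of "- 1 / 10000 :: real"] Q1 Q_le by (intro power_mono) auto
  also have "\<dots> = 2 ^ r * exp (- real r / 10000)"
    by (simp add: power_mult_distrib exp_of_nat_mult[symmetric])
  finally show ?thesis .
qed

lemma sum_binomial_split_quarter:
  "(\<Sum>k | k \<le> r \<and> P k. r choose k)
     \<le> (\<Sum>k | k \<le> r \<and> r \<le> 4 * k \<and> P k. r choose k) + (\<Sum>k | 4 * k < r. r choose k)"
proof -
  have finite_lower: "finite {k. 4 * k < r}"
    by (rule finite_subset[of _ "{..r}"]) auto
  have "{k. k \<le> r \<and> P k} \<subseteq> {k. k \<le> r \<and> r \<le> 4 * k \<and> P k} \<union> {k. 4 * k < r}"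
    by auto
  then have "(\<Sum>k | k \<le> r \<and> P k. r choose k) \<le> (\<Sum>k \<in> {k. k \<le> r \<and> r \<le> 4 * k \<and> P k} \<union> {k. 4 * k < r}. r choose k)"
    using finite_lower by (intro sum_mono2) auto
  also have "\<dots> \<le> (\<Sum>k | k \<le> r \<and> r \<le> 4 * k \<and> P k. r choose k) + (\<Sum>k | 4 * k < r. r choose k)"
    using sum.union_inter[of "{k. k \<le> r \<and> r \<le> 4 * k \<and> P k}" "{k. 4 * k < r}" "\<lambda>k. r choose k"]
      finite_lower by simp
  finally show ?thesis .
qed

lemma sum_binomial_upper_three_quarters:
  "2 ^ r - 2 ^ r * exp (- real r / 10000) \<le> real (\<Sum>k | k \<le> r \<and> r \<le> 4 * k. r choose k)"
proof -
  have "(\<Sum>k | k \<le> r \<and> True. r choose k) = 2 ^ r"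
    using choose_row_sum[of r] by (simp add: atMost_def)
  then have "real (2 ^ r) \<le> real ((\<Sum>k | k \<le> r \<and> r \<le> 4 * k. r choose k) + (\<Sum>k | 4 * k < r. r choose k))"
    using sum_binomial_split_quarter[of r "\<lambda>_. True"] by (intro of_nat_mono) simp
  then have "2 ^ r \<le> real (\<Sum>k | k \<le> r \<and> r \<le> 4 * k. r choose k) + real (\<Sum>k | 4 * k < r. r choose k)"
    by (simp only: of_nat_add of_nat_power of_nat_numeral)
  then show ?thesis
    using sum_binomial_lower_quarter[of r] by linarith
qed

lemma sum_binomial_odd_upper_three_quarters:
  assumes "0 < r"
  shows "2 ^ r / 2 - 2 ^ r * exp (- real r / 10000)
           \<le> real (\<Sum>k | k \<le> r \<and> r \<le> 4 * k \<and> odd k. r choose k)"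
proof -
  have "2 * real (\<Sum>k | k \<le> r \<and> odd k. r choose k) = 2 ^ r"
    using choose_odd_sum[OF assms, where 'a = real]
    by (simp add: sum.inter_filter[symmetric] atMost_def)
  moreover have "real (\<Sum>k | k \<le> r \<and> odd k. r choose k)
      \<le> real (\<Sum>k | k \<le> r \<and> r \<le> 4 * k \<and> odd k. r choose k) + real (\<Sum>k | 4 * k < r. r choose k)"
    using of_nat_mono[OF sum_binomial_split_quarter[of r odd]] by (simp only: of_nat_add)
  ultimately show ?thesis
    using sum_binomial_lower_quarter[of r] by linarith
qed

section \<open>Arithmetic of counter points\<close>

lemma counter_point_cval_pos:
  assumes "counter_point n d p"
  shows "0 < cval n d"
  using assms unfolding counter_point_def by linarith

text \<open>u is the common scale of c = 3.9 u and k = 2.3 u, and z is the value around which the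
  counts \<pi>_i of a counter point lie for 1 < i < n.\<close>

lemma counter_point_mean_bounds:
  assumes "counter_point n d p" and "3 \<le> n"
  defines "u \<equiv> real d / (real n + 2)" and "z \<equiv> (real d - real (tau n 1 p)) / (real n - 2)"
  shows "z < 1.1 * u" and "2.3 * u \<le> 1.98 * z + real (tau n 1 p) / 4"
proof -
  define R where "R = real (tau n 1 p)"
  have "cval n d = 3.9 * u"
    unfolding cval_def u_def by simp
  then have u_pos: "0 < u"
    using counter_point_cval_pos[OF assms(1)] by simp
  have R_bounds: "3.9 * u < R" "R < 4.29 * u"
    using assms(1) unfolding counter_point_def cval_def u_def R_def by auto
  have z_eq: "z * (real n - 2) = u * (real n + 2) - R"
    using assms(2) unfolding z_def u_def R_def by simp
  have "z * (real n - 2) < u * (real n - 2) + 0.1 * u"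
    using z_eq R_bounds by (simp add: algebra_simps)
  also have "\<dots> \<le> (1.1 * u) * (real n - 2)"
    using u_pos assms(2) by (simp add: algebra_simps)
  finally show "z < 1.1 * u"
    using assms(2) by (simp add: mult_less_cancel_right)
  have "u \<le> z \<or> 5 * u - R \<le> z"
  proof (cases "R \<le> 4 * u")
    case True
    then have "u * (real n - 2) \<le> z * (real n - 2)"
      using z_eq by (simp add: algebra_simps)
    then show ?thesis
      using assms(2) by (simp add: mult_le_cancel_right)
  next
    case False
    have gap: "(u - z) * (real n - 2) = R - 4 * u"
      using z_eq by (simp add: algebra_simps)
    then have "0 < (u - z) * (real n - 2)"
      using False by simp
    then have "0 \<le> u - z"
      using assms(2) by (simp add: zero_less_mult_iff)
    then have "u - z \<le> (u - z) * (real n - 2)"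
      using assms(2) by (simp add: mult_le_cancel_left1)
    then show ?thesis
      using gap by simp
  qed
  then show "2.3 * u \<le> 1.98 * z + real (tau n 1 p) / 4"
    using R_bounds u_pos unfolding R_def power2_eq_square by linarith
qed

lemma counter_point_pair_light:
  assumes "counter_point n d p" and "3 \<le> n" and "1 < i" "i < n" and "1 < j" "j < n"
  shows "real (pi_cnt i p) + real (pi_cnt j p) < kval n d"
proof -
  define u where "u = real d / (real n + 2)"
  define z where "z = (real d - real (tau n 1 p)) / (real n - 2)"
  have "real (pi_cnt i p) \<le> 1.01 * z" "real (pi_cnt j p) \<le> 1.01 * z"
    using assms unfolding counter_point_def z_def by auto
  moreover have "cval n d = 3.9 * u" "kval n d = 2.3 * u"
    unfolding cval_def kval_def u_def by simp_all
  ultimately show ?thesis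
    using counter_point_mean_bounds(1)[OF assms(1,2), folded u_def z_def]
      counter_point_cval_pos[OF assms(1)] by simp
qed

lemma counter_point_pair_heavy:
  assumes "counter_point n d p" and "3 \<le> n" and "1 < i" "i < n" and "1 < j" "j < n"
    and "real (tau n 1 p) \<le> 4 * real s"
  shows "kval n d \<le> real (pi_cnt i p) + real (pi_cnt j p) + real s"
proof -
  define u where "u = real d / (real n + 2)"
  define z where "z = (real d - real (tau n 1 p)) / (real n - 2)"
  have "0.99 * z \<le> real (pi_cnt i p)" "0.99 * z \<le> real (pi_cnt j p)"
    using assms unfolding counter_point_def z_def by auto
  moreover have "kval n d = 2.3 * u"
    unfolding kval_def u_def by simp
  ultimately show ?thesis
    using counter_point_mean_bounds(2)[OF assms(1,2), folded u_def z_def] assms(7) by linarith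
qed

section \<open>Moving extreme coordinates inwards\<close>

lemma card_lessThan_filter: "card {j. j < (d::nat) \<and> P j} = (\<Sum>j<d. of_bool (P j))"
proof -
  have "card {j. j < d \<and> P j} = (\<Sum>j \<in> {j \<in> {..<d}. P j}. 1)"
    by simp
  also have "\<dots> = (\<Sum>j<d. of_bool (P j))"
    by (subst sum.inter_filter) (simp_all add: of_bool_def)
  finally show ?thesis .
qed

lemma pi_cnt_eq_sum: "pi_cnt x q = (\<Sum>j<length q. of_bool (q ! j = int x))"
  unfolding pi_cnt_def count_list_eq_length_filter length_filter_conv_card card_lessThan_filter
  by (simp add: eq_commute)

definition inward_dir :: "int list \<Rightarrow> nat set \<Rightarrow> int list" where
  "inward_dir p S = map (\<lambda>j. if j \<in> S then if p ! j = 1 then 1 else -1 else 0) [0..<length p]"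

lemma length_line_pt_inward_dir [simp]: "length (line_pt p (inward_dir p S) t) = length p"
  by (simp add: line_pt_def inward_dir_def)

lemma nth_line_pt_inward_dir:
  "j < length p \<Longrightarrow> line_pt p (inward_dir p S) t ! j
     = (if j \<in> S then if p ! j = 1 then 1 + int t else p ! j - int t else p ! j)"
  by (simp add: line_pt_def inward_dir_def)

locale inward_line =
  fixes n d :: nat and p :: "int list" and S :: "nat set"
  assumes three_le_n: "3 \<le> n"
    and p_in_grid: "in_grid n d p"
    and S_extreme: "S \<subseteq> {j. j < d \<and> (p ! j = 1 \<or> p ! j = int n)}"
begin

abbreviation pt :: "nat \<Rightarrow> int list" where
  "pt \<equiv> line_pt p (inward_dir p S)"

abbreviation low :: nat where
  "low \<equiv> card {j \<in> S. p ! j = 1}"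

abbreviation high :: nat where
  "high \<equiv> card {j \<in> S. p ! j = int n}"

lemma length_p: "length p = d"
  using p_in_grid by (simp add: in_grid_def)

lemma card_S: "card S = low + high"
proof -
  have "finite S"
    using S_extreme by (rule finite_subset) auto
  have "S = {j \<in> S. p ! j = 1} \<union> {j \<in> S. p ! j = int n}"
    using S_extreme by auto
  also have "card \<dots> = low + high"
    using \<open>finite S\<close> three_le_n by (intro card_Un_disjoint) auto
  finally show ?thesis .
qed

lemma pt_0: "pt 0 = p"
  by (rule nth_equalityI) (simp_all add: nth_line_pt_inward_dir)

lemma pt_in_grid:
  assumes "t < n"
  shows "in_grid n d (pt t)"
proof -
  have "1 \<le> pt t ! j \<and> pt t ! j \<le> int n" if "j < d" for j
  proof -
    have "1 \<le> p ! j \<and> p ! j \<le> int n"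
      using p_in_grid that length_p by (auto simp: in_grid_def)
    moreover have "j \<in> S \<Longrightarrow> p ! j = 1 \<or> p ! j = int n"
      using S_extreme by auto
    ultimately show ?thesis
      using that assms length_p by (auto simp: nth_line_pt_inward_dir)
  qed
  then show ?thesis
    using length_p by (auto simp: in_grid_def in_set_conv_nth)
qed

lemma card_S_filter: "card {j \<in> S. P j} = (\<Sum>j<d. of_bool (j \<in> S \<and> P j))"
proof -
  have "{j \<in> S. P j} = {j. j < d \<and> j \<in> S \<and> P j}"
    using S_extreme by auto
  then show ?thesis
    by (simp only: card_lessThan_filter)
qed

text \<open>A coordinate of S moves from 1 to t + 1 or from n to n - t; the indicator terms are put on
  both sides so that no subtraction occurs.\<close>

lemma pi_cnt_pt:
  assumes "t < n"
  shows "pi_cnt x (pt t) + of_bool (x = 1) * low + of_bool (x = n) * high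
       = pi_cnt x p + of_bool (x = t + 1) * low + of_bool (x = n - t) * high"
proof -
  have "(of_bool (pt t ! j = int x) :: nat) + of_bool (x = 1) * of_bool (j \<in> S \<and> p ! j = 1)
          + of_bool (x = n) * of_bool (j \<in> S \<and> p ! j = int n)
      = (of_bool (p ! j = int x) :: nat) + of_bool (x = t + 1) * of_bool (j \<in> S \<and> p ! j = 1)
          + of_bool (x = n - t) * of_bool (j \<in> S \<and> p ! j = int n)" (is "?l j = ?r j")
    if "j < d" for j
  proof -
    consider "j \<notin> S" | "j \<in> S" "p ! j = 1" | "j \<in> S" "p ! j = int n"
      using S_extreme by auto
    then show ?thesis
    proof cases
      case 1
      then show ?thesis using that length_p by (simp add: nth_line_pt_inward_dir)
    next
      case 2
      then have "pt t ! j = int (t + 1)"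
        using that length_p by (simp add: nth_line_pt_inward_dir)
      then show ?thesis using 2 three_le_n by simp
    next
      case 3
      then have "pt t ! j = int (n - t)"
        using that assms length_p three_le_n by (simp add: nth_line_pt_inward_dir of_nat_diff)
      moreover have "p ! j \<noteq> 1"
        using 3 three_le_n by simp
      ultimately show ?thesis using 3 by (simp add: eq_commute[of x])
    qed
  qed
  then have "(\<Sum>j<d. ?l j) = (\<Sum>j<d. ?r j)"
    by (intro sum.cong) simp_all
  then show ?thesis
    unfolding pi_cnt_eq_sum length_line_pt_inward_dir length_p card_S_filter sum.distrib sum_distrib_left .
qed

lemma pi_cnt_pt_inner:
  assumes "t < n" and "1 < x" and "x < n"
  shows "pi_cnt x (pt t) = pi_cnt x p + of_bool (x = t + 1) * low + of_bool (x = n - t) * high"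
  using pi_cnt_pt[OF assms(1), of x] assms(2,3) by simp

lemma tau_one_eq: "tau n 1 q = pi_cnt 1 q + pi_cnt n q"
  using three_le_n by (simp add: tau_def)

lemma tau_one_pt_interior:
  assumes "0 < t" and "t < n - 1"
  shows "tau n 1 (pt t) + card S = tau n 1 p"
proof -
  have "t < n" "t \<noteq> 0" "n - t \<noteq> 1" "n \<noteq> t + 1" "n - t \<noteq> n"
    using assms by auto
  then show ?thesis
    using pi_cnt_pt[of t 1] pi_cnt_pt[of t n] three_le_n unfolding tau_one_eq card_S by simp
qed

lemma tau_one_pt_last: "tau n 1 (pt (n - 1)) = tau n 1 p"
proof -
  have "n - 1 < n"
    using three_le_n by simp
  then show ?thesis
    using pi_cnt_pt[of "n - 1" 1] pi_cnt_pt[of "n - 1" n] three_le_n unfolding tau_one_eq by simp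
qed

lemma pi_cnt_pt_last_inner:
  assumes "1 < x" and "x < n"
  shows "pi_cnt x (pt (n - 1)) = pi_cnt x p"
  using pi_cnt_pt_inner[of "n - 1" x] assms by simp

lemma sigma_pt:
  assumes "t < n"
  shows "sigma n (pt t) + low = sigma n p + of_bool (2 * (t + 1) \<le> n) * low + of_bool (2 * (n - t) \<le> n) * high"
proof -
  define X where "X = {i::nat. 1 \<le> i \<and> real i \<le> real n / 2}"
  have X_eq: "X = {i. 1 \<le> i \<and> 2 * i \<le> n}"
    unfolding X_def by auto
  have "finite X"
    unfolding X_eq by (rule finite_subset[of _ "{..n}"]) auto
  have of_bool_sum: "(\<Sum>x\<in>X. of_bool (x = y) * c) = of_bool (y \<in> X) * c" for y c :: nat
  proof -
    have "(\<Sum>x\<in>X. of_bool (x = y) * c) = (\<Sum>x\<in>X. if x = y then c else 0)"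
      by (intro sum.cong) auto
    then show ?thesis
      using \<open>finite X\<close> by simp
  qed
  have "(\<Sum>x\<in>X. pi_cnt x (pt t) + of_bool (x = 1) * low + of_bool (x = n) * high)
      = (\<Sum>x\<in>X. pi_cnt x p + of_bool (x = t + 1) * low + of_bool (x = n - t) * high)"
    using pi_cnt_pt[OF assms] by (intro sum.cong) auto
  then have "sigma n (pt t) + of_bool (1 \<in> X) * low + of_bool (n \<in> X) * high
      = sigma n p + of_bool (t + 1 \<in> X) * low + of_bool (n - t \<in> X) * high"
    unfolding sum.distrib of_bool_sum sigma_def X_def[symmetric] .
  then show ?thesis
    using three_le_n assms unfolding X_eq by simp
qed

lemma sigma_pt_first_half:
  assumes "2 * (t + 1) \<le> n"
  shows "sigma n (pt t) = sigma n p"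
  using sigma_pt[of t] assms by simp

lemma odd_sigma_pt_second_half:
  assumes "t < n" and "n \<le> 2 * t"
  shows "odd (sigma n (pt t)) \<longleftrightarrow> odd (sigma n p + card S)"
proof -
  have "2 * (n - t) \<le> n"
    using assms by simp
  then have "sigma n (pt t) + 2 * low = sigma n p + card S"
    using sigma_pt[OF assms(1)] assms card_S by simp
  then show ?thesis
    by (metis odd_add even_mult_iff even_numeral)
qed

end

section \<open>Letters along the line\<close>

lemma le_ceiling_half_iff: "int j \<le> \<lceil>real n / 2\<rceil> \<longleftrightarrow> 2 * j \<le> n + 1"
proof -
  have "int j \<le> \<lceil>real n / 2\<rceil> \<longleftrightarrow> real_of_int (int j - 1) < real n / 2"
    by (simp add: le_ceiling_iff)
  also have "\<dots> \<longleftrightarrow> 2 * j \<le> n + 1"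
    by linarith
  finally show ?thesis .
qed

lemma grid_rules_counter_point:
  assumes "grid_rules n d w G" and "in_grid n d q" and "counter_point n d q"
  shows "G q = (if odd (sigma n q) then w ! 0 else w ! (n - 1))"
  using assms unfolding grid_rules_def by auto

lemma grid_rules_unique_heavy:
  assumes "grid_rules n d w G" and "in_grid n d q"
    and "real (tau n 1 q) \<le> cval n d" and "unique_heavy n d q i"
  shows "G q = (if odd (sigma n q) then w ! (i - 1) else w ! (n - i))"
  using assms unfolding grid_rules_def by auto

locale counter_inward_line = inward_line +
  fixes w :: "'a list" and G :: "int list \<Rightarrow> 'a"
  assumes length_w: "length w = n"
    and grid: "grid_rules n d w G"
    and counter: "counter_point n d p"
    and S_large: "tau n 1 p \<le> 4 * card S"
begin

lemma pt_last_counter_point: "counter_point n d (pt (n - 1))"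
  using counter tau_one_pt_last pi_cnt_pt_last_inner unfolding counter_point_def by auto

lemma tau_one_pt_interior_le_cval:
  assumes "0 < t" and "t < n - 1"
  shows "real (tau n 1 (pt t)) \<le> cval n d"
  using tau_one_pt_interior[OF assms] S_large counter counter_point_cval_pos[OF counter]
  unfolding counter_point_def by linarith

lemma tau_pt_interior_heavy:
  assumes "0 < t" and "t < n - 1"
  shows "kval n d \<le> real (tau n (min (t + 1) (n - t)) (pt t))"
proof -
  define i where "i = min (t + 1) (n - t)"
  have "t < n" "1 < i" "i < n" "1 < n - i + 1" "n - i + 1 < n"
    using assms unfolding i_def by auto
  moreover have "{i, n - i + 1} = {t + 1, n - t}"
    using assms unfolding i_def by auto
  ultimately have "pi_cnt i p + pi_cnt (n - i + 1) p + card S \<le> tau n i (pt t)"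
    unfolding tau_def card_S by (auto simp: pi_cnt_pt_inner doubleton_eq_iff)
  moreover have "kval n d \<le> real (pi_cnt i p) + real (pi_cnt (n - i + 1) p) + real (card S)"
    using counter_point_pair_heavy[OF counter three_le_n] S_large \<open>1 < i\<close> \<open>i < n\<close>
      \<open>1 < n - i + 1\<close> \<open>n - i + 1 < n\<close> by simp
  ultimately show ?thesis
    unfolding i_def by linarith
qed

lemma tau_pt_interior_light:
  assumes "0 < t" and "t < n - 1" and "1 < j" and "2 * j \<le> n + 1" and "j \<noteq> min (t + 1) (n - t)"
  shows "real (tau n j (pt t)) < kval n d"
proof -
  have "t < n" "j < n" "1 < n - j + 1" "n - j + 1 < n"
    using assms three_le_n by auto
  moreover have "j \<notin> {t + 1, n - t}" "n - j + 1 \<notin> {t + 1, n - t}"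
    using assms by auto
  ultimately have "tau n j (pt t) = pi_cnt j p + pi_cnt (n - j + 1) p"
    unfolding tau_def using assms(3) by (simp add: pi_cnt_pt_inner)
  then show ?thesis
    using counter_point_pair_light[OF counter three_le_n] assms(3) \<open>j < n\<close>
      \<open>1 < n - j + 1\<close> \<open>n - j + 1 < n\<close> by simp
qed

lemma unique_heavy_pt_interior:
  assumes "0 < t" and "t < n - 1"
  shows "unique_heavy n d (pt t) (min (t + 1) (n - t))"
  using assms tau_pt_interior_heavy[OF assms] tau_pt_interior_light[OF assms]
  unfolding unique_heavy_def le_ceiling_half_iff by (fastforce simp: not_le)

lemma G_pt_interior:
  assumes "0 < t" and "t < n - 1"
  shows "G (pt t) = (if 2 * (t + 1) \<le> n then if odd (sigma n p) then w ! t else rev w ! t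
                     else if odd (sigma n p + card S) then rev w ! t else w ! t)"
proof -
  define i where "i = min (t + 1) (n - t)"
  have "t < n"
    using assms by simp
  have G_eq: "G (pt t) = (if odd (sigma n (pt t)) then w ! (i - 1) else w ! (n - i))"
    using grid_rules_unique_heavy[OF grid pt_in_grid[OF \<open>t < n\<close>]]
      tau_one_pt_interior_le_cval[OF assms] unique_heavy_pt_interior[OF assms]
    unfolding i_def by blast
  have rev_eq: "rev w ! t = w ! (n - 1 - t)"
    using \<open>t < n\<close> length_w by (simp add: rev_nth)
  consider "2 * (t + 1) \<le> n" | "n \<le> 2 * t" | "n = 2 * t + 1"
    by (cases "n \<le> 2 * t"; cases "n = 2 * t + 1") auto
  then show ?thesis
  proof cases
    case 1
    then show ?thesis
      using G_eq rev_eq sigma_pt_first_half[OF 1] unfolding i_def by (simp add: algebra_simps)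
  next
    case 2
    have "i = n - t" "n - (n - t) = t" "n - t - 1 = n - 1 - t"
      using 2 \<open>t < n\<close> unfolding i_def by auto
    then show ?thesis
      using G_eq rev_eq 2 odd_sigma_pt_second_half[OF \<open>t < n\<close> 2] by simp
  next
    case 3
    have "i - 1 = t" "n - i = t" "n - 1 - t = t"
      using 3 unfolding i_def by auto
    then show ?thesis
      using G_eq rev_eq 3 by simp
  qed
qed

lemma G_pt:
  assumes "t < n"
  shows "G (pt t) = (if 2 * (t + 1) \<le> n then if odd (sigma n p) then w ! t else rev w ! t
                     else if odd (sigma n p + card S) then rev w ! t else w ! t)"
proof -
  have rev_eq: "rev w ! t = w ! (n - 1 - t)"
    using assms length_w by (simp add: rev_nth)
  consider "t = 0" | "t = n - 1" | "0 < t" "t < n - 1"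
    using assms by linarith
  then show ?thesis
  proof cases
    case 1
    then show ?thesis
      using grid_rules_counter_point[OF grid p_in_grid counter] pt_0 rev_eq three_le_n by simp
  next
    case 2
    then have "counter_point n d (pt t)" "n \<le> 2 * t"
      using pt_last_counter_point three_le_n by auto
    then show ?thesis
      using grid_rules_counter_point[OF grid pt_in_grid[OF assms]]
        odd_sigma_pt_second_half[OF assms] rev_eq 2 three_le_n by simp
  next
    case 3
    then show ?thesis
      by (rule G_pt_interior)
  qed
qed

text \<open>For odd |S| the parity of \<sigma>(p) + |S| is the opposite of that of \<sigma>(p), so both halves of
  the line are read in the same orientation; for a palindrome the orientation is irrelevant.\<close>

lemma line_contains_inward_dir:
  assumes "odd (card S) \<or> rev w = w"
  shows "line_contains n d w G p (inward_dir p S)"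
proof -
  have letters: "G (pt t) = (if odd (sigma n p) then w ! t else rev w ! t)" if "t < n" for t
    using G_pt[OF that] assms by auto
  have "map (\<lambda>t. G (pt t)) [0..<n] = (if odd (sigma n p) then w else rev w)"
    using length_w letters by (intro nth_equalityI) auto
  then show ?thesis
    unfolding line_contains_def using pt_in_grid by auto
qed

end

section \<open>Counting the lines\<close>

lemma card_subsets_card_filter:
  assumes "finite A"
  shows "card {B. B \<subseteq> A \<and> P (card B)} = (\<Sum>k | k \<le> card A \<and> P k. card A choose k)"
proof -
  have "{B. B \<subseteq> A \<and> P (card B)} = (\<Union>k \<in> {k. k \<le> card A \<and> P k}. {B. B \<subseteq> A \<and> card B = k})"
    using assms by (auto intro: card_mono)
  also have "card \<dots> = (\<Sum>k | k \<le> card A \<and> P k. card {B. B \<subseteq> A \<and> card B = k})"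
    using assms by (intro card_UN_disjoint) (auto intro: finite_subset[of _ "Pow A"])
  also have "\<dots> = (\<Sum>k | k \<le> card A \<and> P k. card A choose k)"
    using assms by (simp add: n_subsets)
  finally show ?thesis .
qed

lemma finite_directions: "finite (directions d)"
  by (rule finite_subset[of _ "{v. set v \<subseteq> {-1, 0, 1} \<and> length v = d}"])
     (auto simp: directions_def intro: finite_lists_length_eq)

lemma inward_dir_in_directions:
  assumes "S \<subseteq> {..<length p}" and "S \<noteq> {}"
  shows "inward_dir p S \<in> directions (length p)"
proof -
  obtain j where "j \<in> S"
    using assms(2) by blast
  moreover have "j < length p"
    using assms(1) \<open>j \<in> S\<close> by auto
  ultimately have "inward_dir p S ! j \<noteq> 0"
    by (simp add: inward_dir_def)
  then have "inward_dir p S \<noteq> replicate (length p) 0"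
    using \<open>j < length p\<close> by auto
  then show ?thesis
    unfolding directions_def by (auto simp: inward_dir_def)
qed

lemma inj_on_inward_dir: "inj_on (inward_dir p) (Pow {..<length p})"
proof
  fix S T
  assume "S \<in> Pow {..<length p}" "T \<in> Pow {..<length p}" and eq: "inward_dir p S = inward_dir p T"
  have "j \<in> S \<longleftrightarrow> j \<in> T" if "j < length p" for j
    using arg_cong[OF eq, of "\<lambda>v. v ! j"] that by (auto simp: inward_dir_def split: if_splits)
  then show "S = T"
    using \<open>S \<in> Pow {..<length p}\<close> \<open>T \<in> Pow {..<length p}\<close> by blast
qed

lemma card_extreme_coordinates:
  assumes "in_grid n d p" and "3 \<le> n"
  shows "card {j. j < d \<and> (p ! j = 1 \<or> p ! j = int n)} = tau n 1 p"
proof -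
  have length_p: "length p = d"
    using assms(1) by (simp add: in_grid_def)
  have "{j. j < d \<and> (p ! j = 1 \<or> p ! j = int n)} = {j. j < d \<and> p ! j = int 1} \<union> {j. j < d \<and> p ! j = int n}"
    by auto
  also have "card \<dots> = pi_cnt 1 p + pi_cnt n p"
    using assms(2) by (subst card_Un_disjoint) (auto simp: pi_cnt_eq_sum card_lessThan_filter length_p)
  finally show ?thesis
    using assms(2) by (simp add: tau_def)
qed

lemma counter_point_tau_pos: "counter_point n d p \<Longrightarrow> 0 < tau n 1 p"
  using counter_point_cval_pos[of n d p] unfolding counter_point_def by linarith

lemma counter_point_exp_le: "counter_point n d p \<Longrightarrow> exp (- real (tau n 1 p) / 10000) \<le> exp (- cval n d / 10000)"
  unfolding counter_point_def by simp

lemma sum_binomial_le_num_lines: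
  assumes "length w = n" and "3 \<le> n" and "grid_rules n d w G"
    and "in_grid n d p" and "counter_point n d p"
    and P_large: "\<And>k. P k \<Longrightarrow> tau n 1 p \<le> 4 * k \<and> (odd k \<or> rev w = w)"
  shows "(\<Sum>k | k \<le> tau n 1 p \<and> P k. tau n 1 p choose k) \<le> num_lines n d w G p"
proof -
  define J where "J = {j. j < d \<and> (p ! j = 1 \<or> p ! j = int n)}"
  define F where "F = {S. S \<subseteq> J \<and> P (card S)}"
  have length_p: "length p = d"
    using assms(4) by (simp add: in_grid_def)
  have "inward_dir p S \<in> {v \<in> directions d. line_contains n d w G p v}" if "S \<in> F" for S
  proof -
    from that have S: "S \<subseteq> J" "tau n 1 p \<le> 4 * card S" "odd (card S) \<or> rev w = w"
      using P_large unfolding F_def by auto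
    interpret counter_inward_line n d p S w G
      using assms S unfolding J_def by unfold_locales auto
    have "S \<noteq> {}"
      using S(2) counter_point_tau_pos[OF assms(5)] by auto
    then show ?thesis
      using inward_dir_in_directions[of S p] S(1) line_contains_inward_dir[OF S(3)]
      unfolding J_def length_p by auto
  qed
  then have "inward_dir p ` F \<subseteq> {v \<in> directions d. line_contains n d w G p v}"
    by auto
  moreover have "inj_on (inward_dir p) F"
    using inj_on_inward_dir[of p] by (rule inj_on_subset) (auto simp: F_def J_def length_p)
  ultimately have "card F \<le> num_lines n d w G p"
    unfolding num_lines_def using finite_directions by (intro card_inj_on_le) auto
  moreover have "finite J"
    unfolding J_def by auto
  ultimately show ?thesis
    using card_subsets_card_filter[of J P] card_extreme_coordinates[OF assms(4,2)]
    unfolding F_def J_def by simp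
qed

lemma num_lines_ge_half_power:
  assumes "length w = n" and "3 \<le> n" and "grid_rules n d w G"
    and "in_grid n d p" and "counter_point n d p" and "tau n 1 p = r"
  shows "2 ^ r / 2 - 2 ^ r * exp (- cval n d / 10000) \<le> real (num_lines n d w G p)"
proof -
  have "(\<Sum>k | k \<le> r \<and> r \<le> 4 * k \<and> odd k. r choose k) \<le> num_lines n d w G p"
    using sum_binomial_le_num_lines[OF assms(1-5), of "\<lambda>k. r \<le> 4 * k \<and> odd k"] assms(6)
    by auto
  then have "real (\<Sum>k | k \<le> r \<and> r \<le> 4 * k \<and> odd k. r choose k) \<le> real (num_lines n d w G p)"
    by (rule of_nat_mono)
  moreover have "0 < r"
    using counter_point_tau_pos[OF assms(5)] assms(6) by simp
  moreover have "2 ^ r * exp (- real r / 10000) \<le> 2 ^ r * exp (- cval n d / 10000)"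
    using counter_point_exp_le[OF assms(5)] assms(6) by simp
  ultimately show ?thesis
    using sum_binomial_odd_upper_three_quarters[OF \<open>0 < r\<close>] by linarith
qed

lemma num_lines_ge_power_if_rev_eq:
  assumes "length w = n" and "3 \<le> n" and "grid_rules n d w G"
    and "in_grid n d p" and "counter_point n d p" and "tau n 1 p = r" and "rev w = w"
  shows "2 ^ r - 2 ^ r * exp (- cval n d / 10000) \<le> real (num_lines n d w G p)"
proof -
  have "(\<Sum>k | k \<le> r \<and> r \<le> 4 * k. r choose k) \<le> num_lines n d w G p"
    using sum_binomial_le_num_lines[OF assms(1-5), of "\<lambda>k. r \<le> 4 * k"] assms(6,7)
    by auto
  then have "real (\<Sum>k | k \<le> r \<and> r \<le> 4 * k. r choose k) \<le> real (num_lines n d w G p)"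
    by (rule of_nat_mono)
  moreover have "2 ^ r * exp (- real r / 10000) \<le> 2 ^ r * exp (- cval n d / 10000)"
    using counter_point_exp_le[OF assms(5)] assms(6) by simp
  ultimately show ?thesis
    using sum_binomial_upper_three_quarters[of r] by linarith
qed

lemma rev_eq_if_nth_symmetric:
  assumes "length w = n" and "\<forall>i. 1 \<le> i \<and> i \<le> n \<longrightarrow> w ! (i - 1) = w ! (n - i)"
  shows "rev w = w"
proof (rule nth_equalityI)
  fix t
  assume "t < length (rev w)"
  then show "rev w ! t = w ! t"
    using assms(2)[rule_format, of "t + 1"] assms(1) by (simp add: rev_nth)
qed simp

theorem lemma21:
  fixes w :: "'a list" and n d r :: nat and G :: "int list \<Rightarrow> 'a" and p :: "int list"
  assumes "length w = n" and "n \<ge> 3" and "d \<ge> 1"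
    and "grid_rules n d w G"
    and "in_grid n d p" and "counter_point n d p" and "tau n 1 p = r"
  shows "real (num_lines n d w G p) \<ge> (1 - 2 * exp (- cval n d / 10000)) * 2 powr (real r - 1) \<and>
         ((\<forall>i. 1 \<le> i \<and> i \<le> n \<longrightarrow> w ! (i - 1) = w ! (n - i)) \<longrightarrow>
           real (num_lines n d w G p) \<ge> (1 - 2 * exp (- cval n d / 10000)) * 2 ^ r)"
proof -
  define E where "E = exp (- cval n d / 10000)"
  have "(1 - 2 * E) * 2 powr (real r - 1) = 2 ^ r / 2 - 2 ^ r * E"
    by (simp add: powr_diff powr_realpow field_simps)
  moreover have "(1 - 2 * E) * 2 ^ r \<le> 2 ^ r - 2 ^ r * E"
    unfolding E_def by (simp add: algebra_simps)
  ultimately show ?thesis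
    using num_lines_ge_half_power[OF assms(1,2,4-7)]
      num_lines_ge_power_if_rev_eq[OF assms(1,2,4-7) rev_eq_if_nth_symmetric[OF assms(1)]]
    unfolding E_def by auto
qed

end
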